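(* Let $M$ and $M'$ be models, each of which solves exactly the same tasks as the $\alpha$-model of its own agreement function ($\alpha_M$, resp. $\alpha_{M'}$). If $\alpha_{M'}(P)\ge\alpha_M(P)$ for every $P\subseteq\Pi$, then every task solvable in $M'$ is solvable in $M$. In particular, if $\alpha_M=\alpha_{M'}$ then $M$ and $M'$ solve exactly the same tasks.
   Context: $\Pi=\{p_1,\dots,p_n\}$ is a set of $n$ asynchronous processes communicating through a shared atomic-snapshot memory; a run is a sequence of process identifiers giving the order of steps, a model is a set of runs. A process participates if it takes at least one step; the participating set is the set of participating processes; a process is correct if it takes infinitely many steps. An algorithm solves a task in model $M$ if all decisions in every run are valid for the task and in every run of $M$ every correct process decides. The agreement function of a model $M$ is the function $\alpha_M:2^\Pi\to\{0,\dots,n\}$ such that for each $P$, in the runs of $M$ in which no process of $\Pi\setminus P$ participates, (iterated) $\alpha_M(P)$-set consensus can be solved but $(\alpha_M(P)-1)$-set consensus cannot ($\alpha_M(P)=0$ if there is no infinite such run); it is monotonic. For monotonic $\alpha$, the $\alpha$-model is the set of runs whose participating set $P$ satisfies $\alpha(P)\ge1$ and in which at most $\alpha(P)-1$ participating processes take only finitely many steps. *)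

theory Defs
  imports Main
begin

text \<open>Processes are 0, ..., n-1 (Pi = {..<n}). A run is an infinite sequence of
process identifiers (the order of steps); a model is a set of runs.\<close>

definition is_run :: "nat \<Rightarrow> (nat \<Rightarrow> nat) \<Rightarrow> bool" where
  "is_run n r \<longleftrightarrow> (\<forall>t. r t < n)"

definition part :: "(nat \<Rightarrow> nat) \<Rightarrow> nat set" where
  "part r = {p. \<exists>t. r t = p}"

definition correct :: "(nat \<Rightarrow> nat) \<Rightarrow> nat \<Rightarrow> bool" where
  "correct r p \<longleftrightarrow> infinite {t. r t = p}"

text \<open>In each step a process either updates
its own register (writing a value and moving to a new local state) or takes an atomic
snapshot of the whole memory (and moves to a new state depending on the snapshot).\<close>

datatype 's op = Upd 's 's | Snap "(nat \<Rightarrow> 's option) \<Rightarrow> 's"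

datatype ('i, 'o, 's) algo =
  Algo (a_init: "nat \<Rightarrow> 'i \<Rightarrow> 's") (a_act: "nat \<Rightarrow> 's \<Rightarrow> 's op")
       (a_dec: "nat \<Rightarrow> 's \<Rightarrow> 'o option")

definition step_cfg :: "('i, 'o, 's) algo \<Rightarrow> nat \<Rightarrow> (nat \<Rightarrow> 's) \<times> (nat \<Rightarrow> 's option)
    \<Rightarrow> (nat \<Rightarrow> 's) \<times> (nat \<Rightarrow> 's option)" where
  "step_cfg A p c = (case a_act A p (fst c p) of
       Upd v s' \<Rightarrow> ((fst c)(p := s'), (snd c)(p := Some v))
     | Snap f \<Rightarrow> ((fst c)(p := f (snd c)), snd c))"

primrec cfg :: "('i, 'o, 's) algo \<Rightarrow> (nat \<Rightarrow> 'i) \<Rightarrow> (nat \<Rightarrow> nat) \<Rightarrow> nat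
    \<Rightarrow> (nat \<Rightarrow> 's) \<times> (nat \<Rightarrow> 's option)" where
  "cfg A inp r 0 = ((\<lambda>p. a_init A p (inp p)), (\<lambda>_. None))"
| "cfg A inp r (Suc t) = step_cfg A (r t) (cfg A inp r t)"

text \<open>Step t of run r is a deciding step of p if p takes it and its resulting state decides.
The decision of p is the one of its first deciding step (decisions are irrevocable).\<close>
definition decides_at :: "('i, 'o, 's) algo \<Rightarrow> (nat \<Rightarrow> 'i) \<Rightarrow> (nat \<Rightarrow> nat) \<Rightarrow> nat \<Rightarrow> nat \<Rightarrow> bool" where
  "decides_at A inp r p t \<longleftrightarrow> r t = p \<and> a_dec A p (fst (cfg A inp r (Suc t)) p) \<noteq> None"

definition decision :: "('i, 'o, 's) algo \<Rightarrow> (nat \<Rightarrow> 'i) \<Rightarrow> (nat \<Rightarrow> nat) \<Rightarrow> nat \<Rightarrow> 'o option" where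
  "decision A inp r p = (if \<exists>t. decides_at A inp r p t
     then a_dec A p (fst (cfg A inp r (Suc (LEAST t. decides_at A inp r p t))) p)
     else None)"

text \<open>A task: a set of admissible input vectors (partial, defined on the participating
processes) and a relation between input vectors and decision vectors (defined on the
processes that decided).\<close>
datatype ('i, 'o) task =
  Task (t_inputs: "(nat \<Rightarrow> 'i option) set")
       (t_delta: "(nat \<Rightarrow> 'i option) \<Rightarrow> (nat \<Rightarrow> 'o option) \<Rightarrow> bool")

definition in_vec :: "(nat \<Rightarrow> nat) \<Rightarrow> (nat \<Rightarrow> 'i) \<Rightarrow> nat \<Rightarrow> 'i option" where
  "in_vec r inp = (\<lambda>p. if p \<in> part r then Some (inp p) else None)"

definition solves :: "nat \<Rightarrow> ('i, 'o, 's) algo \<Rightarrow> ('i, 'o) task \<Rightarrow> (nat \<Rightarrow> nat) set \<Rightarrow> bool" where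
  "solves n A T M \<longleftrightarrow>
     (\<forall>r inp. is_run n r \<and> in_vec r inp \<in> t_inputs T \<longrightarrow> t_delta T (in_vec r inp) (decision A inp r))
   \<and> (\<forall>r\<in>M. \<forall>inp. in_vec r inp \<in> t_inputs T \<longrightarrow> (\<forall>p. correct r p \<longrightarrow> decision A inp r p \<noteq> None))"

text \<open>Solvability, with algorithms whose local states / register values have type 's.\<close>
definition solvable :: "'s itself \<Rightarrow> nat \<Rightarrow> (nat \<Rightarrow> nat) set \<Rightarrow> ('i, 'o) task \<Rightarrow> bool" where
  "solvable _ n M T \<longleftrightarrow> (\<exists>A :: ('i, 'o, 's) algo. solves n A T M)"

definition set_consensus :: "nat \<Rightarrow> (nat, nat) task" where
  "set_consensus k = Task UNIV
     (\<lambda>inv outv. (\<forall>p v. outv p = Some v \<longrightarrow> (\<exists>q. inv q = Some v)) \<and> card (ran outv) \<le> k)"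

definition agreement_function :: "nat \<Rightarrow> (nat \<Rightarrow> nat) set \<Rightarrow> nat set \<Rightarrow> nat" where
  "agreement_function n M P =
     (LEAST k. solvable TYPE(nat) n {r \<in> M. part r \<subseteq> P} (set_consensus k))"

definition alpha_model :: "nat \<Rightarrow> (nat set \<Rightarrow> nat) \<Rightarrow> (nat \<Rightarrow> nat) set" where
  "alpha_model n \<alpha> = {r. is_run n r \<and> \<alpha> (part r) \<ge> 1
       \<and> card {p \<in> part r. \<not> correct r p} \<le> \<alpha> (part r) - 1}"

end

theory Submission
  imports Defs
begin

text \<open>Solvability is antitone in the model: fewer runs only weaken the liveness requirement,
while validity quantifies over all runs regardless of the model. The alpha-model is monotone
in alpha, so a pointwise larger agreement function yields a larger alpha-model and hence fewer
solvable tasks; since each model solves the same tasks as its alpha-model, the claim follows.\<close>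

lemma solvable_subset:
  assumes "N \<subseteq> M" and "solvable TYPE('s) n M T"
  shows "solvable TYPE('s) n N T"
  using assms unfolding solvable_def solves_def by blast

lemma part_subset_lessThan: "is_run n r \<Longrightarrow> part r \<subseteq> {..<n}"
  unfolding is_run_def part_def by auto

lemma alpha_model_mono:
  assumes "\<forall>P \<subseteq> {..<n}. \<alpha> P \<le> \<beta> P"
  shows "alpha_model n \<alpha> \<subseteq> alpha_model n \<beta>"
proof
  fix r assume r: "r \<in> alpha_model n \<alpha>"
  then have "\<alpha> (part r) \<le> \<beta> (part r)"
    using assms part_subset_lessThan by (auto simp: alpha_model_def)
  with r show "r \<in> alpha_model n \<beta>" by (auto simp: alpha_model_def)
qed

lemma solvable_of_agreement_function_le:
  fixes M M' :: "(nat \<Rightarrow> nat) set" and T :: "('i, 'o) task"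
  assumes M: "\<forall>T :: ('i, 'o) task. solvable TYPE('s) n M T
                \<longleftrightarrow> solvable TYPE('s) n (alpha_model n (agreement_function n M)) T"
    and M': "\<forall>T :: ('i, 'o) task. solvable TYPE('s) n M' T
                \<longleftrightarrow> solvable TYPE('s) n (alpha_model n (agreement_function n M')) T"
    and le: "\<forall>P \<subseteq> {..<n}. agreement_function n M P \<le> agreement_function n M' P"
    and T: "solvable TYPE('s) n M' T"
  shows "solvable TYPE('s) n M T"
proof -
  have "solvable TYPE('s) n (alpha_model n (agreement_function n M')) T"
    using M' T by blast
  then have "solvable TYPE('s) n (alpha_model n (agreement_function n M)) T"
    using solvable_subset alpha_model_mono[OF le] by blast
  then show ?thesis using M by blast
qed

theorem mainTheorem15:
  fixes n :: nat and M M' :: "(nat \<Rightarrow> nat) set"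
  assumes "n \<ge> 1"
    and "\<forall>r\<in>M. is_run n r" and "\<forall>r\<in>M'. is_run n r"
    and "\<forall>T :: ('i, 'o) task. solvable TYPE('s) n M T
            \<longleftrightarrow> solvable TYPE('s) n (alpha_model n (agreement_function n M)) T"
    and "\<forall>T :: ('i, 'o) task. solvable TYPE('s) n M' T
            \<longleftrightarrow> solvable TYPE('s) n (alpha_model n (agreement_function n M')) T"
  shows "((\<forall>P \<subseteq> {..<n}. agreement_function n M' P \<ge> agreement_function n M P)
           \<longrightarrow> (\<forall>T :: ('i, 'o) task. solvable TYPE('s) n M' T \<longrightarrow> solvable TYPE('s) n M T))
         \<and> ((\<forall>P \<subseteq> {..<n}. agreement_function n M' P = agreement_function n M P)
           \<longrightarrow> (\<forall>T :: ('i, 'o) task. solvable TYPE('s) n M T \<longleftrightarrow> solvable TYPE('s) n M' T))"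
proof (intro conjI impI allI)
  fix T :: "('i, 'o) task"
  assume "\<forall>P \<subseteq> {..<n}. agreement_function n M' P \<ge> agreement_function n M P"
    and "solvable TYPE('s) n M' T"
  then show "solvable TYPE('s) n M T"
    using solvable_of_agreement_function_le[OF assms(4,5)] by blast
next
  fix T :: "('i, 'o) task"
  assume "\<forall>P \<subseteq> {..<n}. agreement_function n M' P = agreement_function n M P"
  then have "\<forall>P \<subseteq> {..<n}. agreement_function n M P \<le> agreement_function n M' P"
    and "\<forall>P \<subseteq> {..<n}. agreement_function n M' P \<le> agreement_function n M P"
    by simp_all
  then show "solvable TYPE('s) n M T \<longleftrightarrow> solvable TYPE('s) n M' T"
    using solvable_of_agreement_function_le[OF assms(4,5)]
      solvable_of_agreement_function_le[OF assms(5,4)] by blast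
qed

end
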